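(* Let $G=(V,E,L)$ be a hypergraph with loops, and let $G_1,G_2$ be section hypergraphs of $G$ such that $G_1\cup G_2=G$, $G_1\cap G_2$ is a complete hypergraph, and $G_1\cap G_2$ has no plus loops. Then $\mathrm{PP}(G)$ is decomposable into $\mathrm{PP}(G_1)$ and $\mathrm{PP}(G_2)$, i.e., $$\mathrm{PP}(G)=\{z\in\mathbb{R}^{V\cup E\cup L}: z|_{G_1}\in\mathrm{PP}(G_1),\ z|_{G_2}\in\mathrm{PP}(G_2)\},$$ where $z|_{G_k}$ denotes the restriction of $z$ to the coordinates indexed by the nodes, edges and loops of $G_k$.
   Context: A hypergraph with loops is $G=(V,E,L)$: $V$ a finite node set, $E$ a set of subsets of $V$ of cardinality at least two, $L$ a set of loops $\{i,i\}$, $i\in V$, partitioned as $L=L^-\cup L^+$ (minus/plus loops). It is complete if $E$ consists of all subsets of $V$ of cardinality at least two. For $V'\subseteq V$, the section hypergraph induced by $V'$ is $(V',E',L')$ with $E'=\{e\in E: e\subseteq V'\}$, $L'=\{\{i,i\}\in L: i\in V'\}$, each loop keeping its sign. For $G_k=(V_k,E_k,L_k)$: $G_1\cap G_2:=(V_1\cap V_2,E_1\cap E_2,L_1\cap L_2)$ and $G_1\cup G_2:=(V_1\cup V_2,E_1\cup E_2,L_1\cup L_2)$. $\mathrm{PP}(G):=\mathrm{conv}\{z\in\mathbb{R}^{V\cup E\cup L}: z_{ii}\ge z_i^2\ \forall\{i,i\}\in L^+,\ z_{ii}\le z_i^2\ \forall \{i,i\}\in L^-,\ z_e=\prod_{i\in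 e}z_i\ \forall e\in E,\ z_i\in[0,1]\ \forall i\in V\}$. *)

theory Defs
  imports Complex_Main
begin

text \<open>A hypergraph with loops G = (V, E, L), L = L^- \<union> L^+.  A loop {i,i} is identified
  with its node i; lminus / lplus are the sets of nodes carrying a minus / plus loop.\<close>
record 'a hgraph =
  nodes  :: "'a set"
  edges  :: "'a set set"
  lminus :: "'a set"
  lplus  :: "'a set"

definition hypergraph_with_loops :: "'a hgraph \<Rightarrow> bool" where
  "hypergraph_with_loops G \<longleftrightarrow> finite (nodes G)
     \<and> (\<forall>e\<in>edges G. e \<subseteq> nodes G \<and> 2 \<le> card e)
     \<and> lminus G \<subseteq> nodes G \<and> lplus G \<subseteq> nodes G \<and> lminus G \<inter> lplus G = {}"

definition complete_hg :: "'a hgraph \<Rightarrow> bool" where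
  "complete_hg G \<longleftrightarrow> edges G = {e. e \<subseteq> nodes G \<and> 2 \<le> card e}"

definition section_hg :: "'a hgraph \<Rightarrow> 'a set \<Rightarrow> 'a hgraph" where
  "section_hg G V' = \<lparr>nodes = V', edges = {e\<in>edges G. e \<subseteq> V'},
     lminus = lminus G \<inter> V', lplus = lplus G \<inter> V'\<rparr>"

definition is_section_hg :: "'a hgraph \<Rightarrow> 'a hgraph \<Rightarrow> bool" where
  "is_section_hg H G \<longleftrightarrow> (\<exists>V'. V' \<subseteq> nodes G \<and> H = section_hg G V')"

definition hg_inter :: "'a hgraph \<Rightarrow> 'a hgraph \<Rightarrow> 'a hgraph" where
  "hg_inter G1 G2 = \<lparr>nodes = nodes G1 \<inter> nodes G2, edges = edges G1 \<inter> edges G2,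
     lminus = lminus G1 \<inter> lminus G2, lplus = lplus G1 \<inter> lplus G2\<rparr>"

definition hg_union :: "'a hgraph \<Rightarrow> 'a hgraph \<Rightarrow> 'a hgraph" where
  "hg_union G1 G2 = \<lparr>nodes = nodes G1 \<union> nodes G2, edges = edges G1 \<union> edges G2,
     lminus = lminus G1 \<union> lminus G2, lplus = lplus G1 \<union> lplus G2\<rparr>"

datatype 'a coord = Nd 'a | Ed "'a set" | Lp 'a

definition coords :: "'a hgraph \<Rightarrow> 'a coord set" where
  "coords G = Nd ` nodes G \<union> Ed ` edges G \<union> Lp ` (lminus G \<union> lplus G)"

text \<open>A point of R^(V \<union> E \<union> L) is a function on coordinates vanishing outside coords G.\<close>
definition space :: "'a hgraph \<Rightarrow> ('a coord \<Rightarrow> real) set" where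
  "space G = {z. \<forall>c. c \<notin> coords G \<longrightarrow> z c = 0}"

definition restr :: "'a hgraph \<Rightarrow> ('a coord \<Rightarrow> real) \<Rightarrow> ('a coord \<Rightarrow> real)" where
  "restr H z = (\<lambda>c. if c \<in> coords H then z c else 0)"

definition conv :: "('i \<Rightarrow> real) set \<Rightarrow> ('i \<Rightarrow> real) set" where
  "conv S = {z. \<exists>(n::nat) (u::nat \<Rightarrow> real) (x::nat \<Rightarrow> 'i \<Rightarrow> real).
      (\<forall>k<n. 0 \<le> u k \<and> x k \<in> S) \<and> (\<Sum>k<n. u k) = 1 \<and> z = (\<lambda>c. \<Sum>k<n. u k * x k c)}"

definition PP_points :: "'a hgraph \<Rightarrow> ('a coord \<Rightarrow> real) set" where
  "PP_points G = {z \<in> space G.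
      (\<forall>i\<in>lplus G. z (Lp i) \<ge> (z (Nd i))^2)
    \<and> (\<forall>i\<in>lminus G. z (Lp i) \<le> (z (Nd i))^2)
    \<and> (\<forall>e\<in>edges G. z (Ed e) = (\<Prod>i\<in>e. z (Nd i)))
    \<and> (\<forall>i\<in>nodes G. 0 \<le> z (Nd i) \<and> z (Nd i) \<le> 1)}"

definition PP :: "'a hgraph \<Rightarrow> ('a coord \<Rightarrow> real) set" where
  "PP G = conv (PP_points G)"

end

theory Submission
  imports Defs "HOL-Analysis.Convex" "HOL-Library.Function_Algebras"
begin

text \<open>
  Restriction to a section is linear and maps generating points to generating points, which
  gives one inclusion.  For the other, let z lie in the right-hand side.  At a node j without
  plus loop, a generating point y is the convex combination, with weights 1 - y_j and y_j, of
  the two generating points obtained by pinning y_j to 0 and to 1 (rescaling the edge and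
  minus-loop coordinates that involve j).  Hence the restrictions of z to G1 and G2 are convex
  combinations of generating points that are 0/1 on the common nodes W.  Since G1 \<inter> G2 is
  complete, every monomial in the nodes of W is a coordinate of z, so both combinations have
  the same moments and therefore, by Moebius inversion over the subsets of W, the same
  distribution of 0/1 patterns on W.  Coupling the two combinations pattern by pattern and
  gluing points that agree on W writes z as a convex combination of generating points of PP(G).
\<close>

subsection \<open>Convex hulls in the space of real-valued functions\<close>

instantiation "fun" :: (type, real_vector) real_vector
begin
definition scaleR_fun :: "real \<Rightarrow> ('a \<Rightarrow> 'b) \<Rightarrow> 'a \<Rightarrow> 'b" where
  "scaleR_fun r f = (\<lambda>x. r *\<^sub>R f x)"
instance by standard (auto simp: scaleR_fun_def fun_eq_iff scaleR_add_right scaleR_add_left)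
end

lemma scaleR_fun_apply [simp]: "(r *\<^sub>R f) x = r *\<^sub>R f x"
  by (simp add: scaleR_fun_def)

lemma sum_fun_apply: "(sum f A) x = sum (\<lambda>k. f k x) A"
  by (induction A rule: infinite_finite_induct) auto

lemma conv_eq_convex_hull: "conv S = convex hull S"
proof
  show "conv S \<subseteq> convex hull S"
  proof
    fix z assume "z \<in> conv S"
    then obtain n and u :: "nat \<Rightarrow> real" and x where
      h: "\<forall>k<n. 0 \<le> u k \<and> x k \<in> S" "(\<Sum>k<n. u k) = 1" "z = (\<lambda>c. \<Sum>k<n. u k * x k c)"
      unfolding conv_def mem_Collect_eq by (elim exE conjE) (rule that, auto)
    have "z = (\<Sum>k<n. u k *\<^sub>R x k)"
      unfolding h(3) by (rule ext) (simp add: sum_fun_apply)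
    also have "\<dots> \<in> convex hull S"
      using h by (intro convex_sum) (auto simp: hull_inc)
    finally show "z \<in> convex hull S" .
  qed
next
  show "convex hull S \<subseteq> conv S"
  proof
    fix z assume "z \<in> convex hull S"
    then obtain F and u :: "('a \<Rightarrow> real) \<Rightarrow> real" where F: "finite F" "F \<subseteq> S"
      "\<forall>x\<in>F. 0 \<le> u x" "sum u F = 1" "(\<Sum>v\<in>F. u v *\<^sub>R v) = z"
      unfolding convex_hull_explicit by blast
    obtain h where h: "bij_betw h {..<card F} F"
      using ex_bij_betw_nat_finite[OF F(1)] lessThan_atLeast0 by auto
    have "(\<Sum>k<card F. u (h k)) = 1"
      using sum.reindex_bij_betw[OF h, of u] F(4) by simp
    moreover have "z = (\<lambda>c. \<Sum>k<card F. u (h k) * h k c)"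
    proof
      fix c
      have "z c = (\<Sum>v\<in>F. u v * v c)" using F(5) by (auto simp: sum_fun_apply)
      also have "\<dots> = (\<Sum>k<card F. u (h k) * h k c)"
        using sum.reindex_bij_betw[OF h, of "\<lambda>v. u v * v c"] by simp
      finally show "z c = (\<Sum>k<card F. u (h k) * h k c)" .
    qed
    moreover have "\<forall>k<card F. 0 \<le> u (h k) \<and> h k \<in> S"
      using h F(2,3) by (auto simp: bij_betw_def)
    ultimately show "z \<in> conv S"
      unfolding conv_def by (intro CollectI exI[of _ "card F"] exI[of _ "u \<circ> h"] exI[of _ h]) simp
  qed
qed

lemma normalized_sum_in_convex_hull:
  fixes u :: "'a::real_vector \<Rightarrow> real"
  assumes "finite A" "\<forall>x\<in>A. 0 \<le> u x" "sum u A \<noteq> 0"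
  shows "(1 / sum u A) *\<^sub>R (\<Sum>x\<in>A. u x *\<^sub>R x) \<in> convex hull A"
proof -
  have "(1 / sum u A) *\<^sub>R (\<Sum>x\<in>A. u x *\<^sub>R x) = (\<Sum>x\<in>A. (u x / sum u A) *\<^sub>R x)"
    by (simp add: scaleR_sum_right)
  also have "\<dots> \<in> convex hull A"
  proof (rule convex_sum)
    show "(\<Sum>x\<in>A. u x / sum u A) = 1"
      using assms(3) by (simp add: sum_divide_distrib[symmetric])
    show "0 \<le> u x / sum u A" if "x \<in> A" for x
      using assms(2) that sum_nonneg[of A u] by auto
  qed (use assms in \<open>auto intro: hull_inc\<close>)
  finally show ?thesis .
qed

lemma sum_over_classes:
  assumes "finite A" "finite K" "\<forall>x\<in>A. \<kappa> x \<notin> K \<longrightarrow> f x = 0"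
  shows "sum f A = (\<Sum>k\<in>K. sum f {x\<in>A. \<kappa> x = k})"
proof -
  have "sum f A = sum f {x\<in>A. \<kappa> x \<in> K}"
    using assms by (intro sum.mono_neutral_right) auto
  also have "\<dots> = (\<Sum>k\<in>K. sum f {x\<in>{x\<in>A. \<kappa> x \<in> K}. \<kappa> x = k})"
    using assms(1,2) by (intro sum.group[symmetric]) auto
  also have "\<dots> = (\<Sum>k\<in>K. sum f {x\<in>A. \<kappa> x = k})"
    by (intro sum.cong refl arg_cong[where f = "sum f"]) auto
  finally show ?thesis .
qed

lemma normalized_pair_in_convex_hull:
  fixes L :: "'a::real_vector \<times> 'b::real_vector \<Rightarrow> 'c::real_vector"
  assumes L: "linear L" and A: "finite A" "\<forall>x\<in>A. 0 \<le> u x" "sum u A \<noteq> 0"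
    and B: "finite B" "\<forall>y\<in>B. 0 \<le> v y" "sum v B \<noteq> 0"
    and pairs: "\<And>x y. x \<in> A \<Longrightarrow> y \<in> B \<Longrightarrow> L (x, y) \<in> S"
  shows "L ((1 / sum u A) *\<^sub>R (\<Sum>x\<in>A. u x *\<^sub>R x), (1 / sum v B) *\<^sub>R (\<Sum>y\<in>B. v y *\<^sub>R y))
    \<in> convex hull S"
proof -
  have "L ((1 / sum u A) *\<^sub>R (\<Sum>x\<in>A. u x *\<^sub>R x), (1 / sum v B) *\<^sub>R (\<Sum>y\<in>B. v y *\<^sub>R y))
      \<in> convex hull (L ` (A \<times> B))"
    using A B by (intro in_convex_hull_linear_image[OF L])
      (simp add: convex_hull_Times normalized_sum_in_convex_hull)
  also have "\<dots> \<subseteq> convex hull S"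
    using pairs by (intro hull_mono) auto
  finally show ?thesis .
qed

lemma coupled_convex_combination_in_convex_hull:
  fixes L :: "'a::real_vector \<times> 'b::real_vector \<Rightarrow> 'c::real_vector"
  assumes L: "linear L" and fin: "finite A" "finite B"
    and u: "\<forall>x\<in>A. 0 \<le> u x" "sum u A = 1" and v: "\<forall>y\<in>B. 0 \<le> v y"
    and weights: "\<And>k. sum u {x\<in>A. \<kappa> x = k} = sum v {y\<in>B. \<mu> y = k}"
    and pairs: "\<And>x y. x \<in> A \<Longrightarrow> y \<in> B \<Longrightarrow> \<kappa> x = \<mu> y \<Longrightarrow> L (x, y) \<in> S"
  shows "L (\<Sum>x\<in>A. u x *\<^sub>R x, \<Sum>y\<in>B. v y *\<^sub>R y) \<in> convex hull S"
proof -
  define w where "w k = sum u {x\<in>A. \<kappa> x = k}" for k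
  define K where "K = {k \<in> \<kappa> ` A. w k \<noteq> 0}"
  define X where "X k = (1 / w k) *\<^sub>R (\<Sum>x\<in>{x\<in>A. \<kappa> x = k}. u x *\<^sub>R x)" for k
  define Y where "Y k = (1 / w k) *\<^sub>R (\<Sum>y\<in>{y\<in>B. \<mu> y = k}. v y *\<^sub>R y)" for k
  have finK: "finite K" using fin by (simp add: K_def)
  have w0: "w k = 0" if "k \<notin> K" for k
  proof (cases "k \<in> \<kappa> ` A")
    case False
    then have "{x\<in>A. \<kappa> x = k} = {}" by force
    then show ?thesis unfolding w_def by (simp only: sum.empty)
  qed (use that in \<open>auto simp: K_def\<close>)
  have u0: "u x = 0" if "x \<in> A" "\<kappa> x \<notin> K" for x
    using w0[OF that(2)] that fin u(1) unfolding w_def by (subst (asm) sum_nonneg_eq_0_iff) auto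
  have v0: "v y = 0" if "y \<in> B" "\<mu> y \<notin> K" for y
    using w0[OF that(2)] that fin v unfolding w_def weights by (subst (asm) sum_nonneg_eq_0_iff) auto
  have "(\<Sum>x\<in>A. u x *\<^sub>R x) = (\<Sum>k\<in>K. \<Sum>x\<in>{x\<in>A. \<kappa> x = k}. u x *\<^sub>R x)"
    using u0 fin finK by (intro sum_over_classes) auto
  also have "\<dots> = (\<Sum>k\<in>K. w k *\<^sub>R X k)"
    by (intro sum.cong refl) (simp add: X_def K_def)
  finally have sumA: "(\<Sum>x\<in>A. u x *\<^sub>R x) = (\<Sum>k\<in>K. w k *\<^sub>R X k)" .
  have "(\<Sum>y\<in>B. v y *\<^sub>R y) = (\<Sum>k\<in>K. \<Sum>y\<in>{y\<in>B. \<mu> y = k}. v y *\<^sub>R y)"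
    using v0 fin finK by (intro sum_over_classes) auto
  also have "\<dots> = (\<Sum>k\<in>K. w k *\<^sub>R Y k)"
    by (intro sum.cong refl) (simp add: Y_def K_def)
  finally have sumB: "(\<Sum>y\<in>B. v y *\<^sub>R y) = (\<Sum>k\<in>K. w k *\<^sub>R Y k)" .
  have "(\<Sum>k\<in>K. w k) = sum u A"
    unfolding w_def using u0 fin finK by (intro sum_over_classes[symmetric]) auto
  then have w1: "(\<Sum>k\<in>K. w k) = 1" using u(2) by simp
  have w_nonneg: "0 \<le> w k" for k
    using u(1) by (auto simp: w_def intro: sum_nonneg)
  have class_pair: "L (X k, Y k) \<in> convex hull S" if "k \<in> K" for k
    using that fin u(1) v pairs unfolding X_def Y_def
    by (subst (1 2) w_def, subst weights, intro normalized_pair_in_convex_hull[OF L])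
      (auto simp: K_def w_def weights)
  have "(\<Sum>x\<in>A. u x *\<^sub>R x, \<Sum>y\<in>B. v y *\<^sub>R y) = (\<Sum>k\<in>K. w k *\<^sub>R (X k, Y k))"
    unfolding sumA sumB by (simp add: sum_prod)
  then have "L (\<Sum>x\<in>A. u x *\<^sub>R x, \<Sum>y\<in>B. v y *\<^sub>R y) = (\<Sum>k\<in>K. w k *\<^sub>R L (X k, Y k))"
    by (simp add: linear_sum[OF L] linear_scale[OF L, symmetric] o_def)
  also have "\<dots> \<in> convex hull S"
    using finK w1 w_nonneg class_pair by (intro convex_sum convex_convex_hull) auto
  finally show ?thesis .
qed

subsection \<open>Binarization at nodes without plus loops\<close>

definition pin_node :: "'a hgraph \<Rightarrow> 'a \<Rightarrow> ('a coord \<Rightarrow> real) \<Rightarrow> real \<Rightarrow> 'a coord \<Rightarrow> real" where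
  "pin_node H j y s = (\<lambda>c. case c of
      Nd i \<Rightarrow> if i = j then s else y c
    | Ed e \<Rightarrow> if e \<in> edges H \<and> j \<in> e then s * (\<Prod>i\<in>e-{j}. y (Nd i)) else y c
    | Lp i \<Rightarrow> if i = j \<and> j \<in> lminus H then y c - y (Nd j) + s else y c)"

lemma pin_node_Nd [simp]: "pin_node H j y s (Nd i) = (if i = j then s else y (Nd i))"
  by (simp add: pin_node_def)

lemma pin_node_in_PP_points:
  assumes y: "y \<in> PP_points H" and j: "j \<in> nodes H" "j \<notin> lplus H"
    and fin: "\<forall>e\<in>edges H. finite e" and s: "s = 0 \<or> s = 1"
  shows "pin_node H j y s \<in> PP_points H"
proof -
  have sp: "y \<in> space H" and pl: "\<forall>i\<in>lplus H. y (Lp i) \<ge> (y (Nd i))\<^sup>2"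
    and mi: "\<forall>i\<in>lminus H. y (Lp i) \<le> (y (Nd i))\<^sup>2"
    and ed: "\<forall>e\<in>edges H. y (Ed e) = (\<Prod>i\<in>e. y (Nd i))"
    and nd: "\<forall>i\<in>nodes H. 0 \<le> y (Nd i) \<and> y (Nd i) \<le> 1"
    using y by (auto simp: PP_points_def)
  let ?p = "pin_node H j y s"
  have "?p \<in> space H"
    using sp j by (auto simp: space_def pin_node_def coords_def split: coord.split)
  moreover have "\<forall>i\<in>lplus H. ?p (Lp i) \<ge> (?p (Nd i))\<^sup>2"
    using pl j by (auto simp: pin_node_def)
  moreover have "\<forall>i\<in>lminus H. ?p (Lp i) \<le> (?p (Nd i))\<^sup>2"
  proof
    fix i assume i: "i \<in> lminus H"
    show "?p (Lp i) \<le> (?p (Nd i))\<^sup>2"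
    proof (cases "i = j")
      case True
      have "(y (Nd j))\<^sup>2 \<le> y (Nd j)"
        using nd j by (simp add: power2_eq_square mult_right_le_one_le)
      moreover have "y (Lp j) \<le> (y (Nd j))\<^sup>2" using mi i True by auto
      moreover have "s\<^sup>2 = s" using s by auto
      ultimately show ?thesis using True i by (simp add: pin_node_def)
    qed (use mi i in \<open>simp add: pin_node_def\<close>)
  qed
  moreover have "\<forall>e\<in>edges H. ?p (Ed e) = (\<Prod>i\<in>e. ?p (Nd i))"
  proof
    fix e assume e: "e \<in> edges H"
    show "?p (Ed e) = (\<Prod>i\<in>e. ?p (Nd i))"
    proof (cases "j \<in> e")
      case True
      have "(\<Prod>i\<in>e. ?p (Nd i)) = ?p (Nd j) * (\<Prod>i\<in>e-{j}. ?p (Nd i))"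
        using fin e True by (simp add: prod.remove)
      also have "(\<Prod>i\<in>e-{j}. ?p (Nd i)) = (\<Prod>i\<in>e-{j}. y (Nd i))"
        by (rule prod.cong) auto
      finally show ?thesis using e True by (simp add: pin_node_def)
    next
      case False
      have "(\<Prod>i\<in>e. ?p (Nd i)) = (\<Prod>i\<in>e. y (Nd i))"
        using False by (intro prod.cong) auto
      then show ?thesis using e False ed by (simp add: pin_node_def)
    qed
  qed
  moreover have "\<forall>i\<in>nodes H. 0 \<le> ?p (Nd i) \<and> ?p (Nd i) \<le> 1"
    using nd s by auto
  ultimately show ?thesis unfolding PP_points_def by blast
qed

lemma pin_node_convex_combination:
  assumes y: "y \<in> PP_points H" and fin: "\<forall>e\<in>edges H. finite e"
  shows "y = (1 - y (Nd j)) *\<^sub>R pin_node H j y 0 + y (Nd j) *\<^sub>R pin_node H j y 1"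
proof
  fix c
  have ed: "\<forall>e\<in>edges H. y (Ed e) = (\<Prod>i\<in>e. y (Nd i))"
    using y by (auto simp: PP_points_def)
  show "y c = ((1 - y (Nd j)) *\<^sub>R pin_node H j y 0 + y (Nd j) *\<^sub>R pin_node H j y 1) c"
  proof (cases c)
    case (Ed e)
    show ?thesis
    proof (cases "e \<in> edges H \<and> j \<in> e")
      case True
      then have "y (Ed e) = y (Nd j) * (\<Prod>i\<in>e-{j}. y (Nd i))"
        using ed fin prod.remove[of e j "\<lambda>i. y (Nd i)"] by auto
      then show ?thesis using True Ed by (simp add: pin_node_def algebra_simps)
    qed (use Ed in \<open>auto simp: pin_node_def algebra_simps\<close>)
  qed (simp_all add: pin_node_def algebra_simps)
qed

definition binary_on :: "'a set \<Rightarrow> ('a coord \<Rightarrow> real) \<Rightarrow> bool" where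
  "binary_on W x \<longleftrightarrow> (\<forall>i\<in>W. x (Nd i) = 0 \<or> x (Nd i) = 1)"

definition binary_points :: "'a hgraph \<Rightarrow> 'a set \<Rightarrow> ('a coord \<Rightarrow> real) set" where
  "binary_points H W = {y \<in> PP_points H. binary_on W y}"

lemma PP_points_subset_convex_hull_binary_points:
  assumes "finite W" "W \<subseteq> nodes H" "W \<inter> lplus H = {}" "\<forall>e\<in>edges H. finite e"
  shows "PP_points H \<subseteq> convex hull (binary_points H W)"
  using assms(1-3)
proof (induction W rule: finite_induct)
  case empty
  then show ?case by (auto simp: binary_points_def binary_on_def intro: hull_inc)
next
  case (insert j W)
  have j: "j \<in> nodes H" "j \<notin> lplus H" using insert.prems by auto
  have "binary_points H W \<subseteq> convex hull (binary_points H (insert j W))"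
  proof
    fix y assume y: "y \<in> binary_points H W"
    then have yP: "y \<in> PP_points H" by (simp add: binary_points_def)
    have "pin_node H j y s \<in> binary_points H (insert j W)" if "s = 0 \<or> s = 1" for s
      using pin_node_in_PP_points[OF yP j assms(4) that] y that
      by (auto simp: binary_points_def binary_on_def)
    then have "pin_node H j y s \<in> convex hull (binary_points H (insert j W))"
      if "s = 0 \<or> s = 1" for s
      using that by (intro hull_inc)
    moreover have "0 \<le> y (Nd j)" "y (Nd j) \<le> 1" using yP j by (auto simp: PP_points_def)
    ultimately show "y \<in> convex hull (binary_points H (insert j W))"
      by (subst pin_node_convex_combination[OF yP assms(4)])
        (intro convexD[OF convex_convex_hull], auto)
  qed
  then have "convex hull (binary_points H W) \<subseteq> convex hull (binary_points H (insert j W))"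
    by (intro hull_minimal) auto
  then show ?case using insert by auto
qed

lemma convex_hull_PP_points_binary_combination:
  assumes "finite W" "W \<subseteq> nodes H" "W \<inter> lplus H = {}" "\<forall>e\<in>edges H. finite e"
    and "z \<in> convex hull PP_points H"
  obtains F u where "finite F" "F \<subseteq> binary_points H W" "\<forall>x\<in>F. 0 \<le> u x" "sum u F = 1"
    "(\<Sum>x\<in>F. u x *\<^sub>R x) = z"
proof -
  have "convex hull PP_points H \<subseteq> convex hull (binary_points H W)"
    using PP_points_subset_convex_hull_binary_points[OF assms(1-4)] by (intro hull_minimal) auto
  then have "z \<in> convex hull (binary_points H W)" using assms(5) by blast
  then show ?thesis
    using that unfolding convex_hull_explicit mem_Collect_eq by (elim exE conjE) blast
qed

subsection \<open>Distributions of 0/1 patterns and their moments\<close>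

lemma superset_sums_zero_imp_zero:
  fixes a :: "'a set \<Rightarrow> 'b::ab_group_add"
  assumes fin: "finite W"
    and sums: "\<And>U. U \<subseteq> W \<Longrightarrow> (\<Sum>T\<in>{T\<in>Pow W. U \<subseteq> T}. a T) = 0"
    and "T \<subseteq> W"
  shows "a T = 0"
proof -
  have "a T = 0" if "T \<subseteq> W" "card (W - T) = n" for n T
    using that
  proof (induction n arbitrary: T rule: less_induct)
    case (less n)
    have "a T' = 0" if T': "T' \<in> {T'\<in>Pow W. T \<subseteq> T'} - {T}" for T'
    proof -
      have "W - T' \<subset> W - T" using T' less.prems(1) by auto
      then have "card (W - T') < n" using fin less.prems(2) by (auto intro: psubset_card_mono)
      then show ?thesis using less.IH T' by auto
    qed
    then have "(\<Sum>T'\<in>{T'\<in>Pow W. T \<subseteq> T'}. a T') = a T"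
      using fin less.prems(1) by (subst sum.remove[of _ T]) (auto intro: sum.neutral)
    then show ?case using sums[OF less.prems(1)] by simp
  qed
  then show ?thesis using assms(3) by blast
qed

definition pattern :: "'a set \<Rightarrow> ('a coord \<Rightarrow> real) \<Rightarrow> 'a set" where
  "pattern W x = {i\<in>W. x (Nd i) = 1}"

lemma prod_binary_eq_indicator:
  assumes "binary_on W x" "U \<subseteq> W" "finite W"
  shows "(\<Prod>i\<in>U. x (Nd i)) = (if U \<subseteq> pattern W x then 1 else 0)"
proof (cases "U \<subseteq> pattern W x")
  case False
  then obtain i where "i \<in> U" "x (Nd i) = 0"
    using assms(1,2) by (auto simp: pattern_def binary_on_def)
  then show ?thesis using False finite_subset[OF assms(2,3)] by (auto intro: prod_zero)
qed (auto simp: pattern_def intro: prod.neutral)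

lemma eq_on_nodes_if_pattern_eq:
  assumes "binary_on W x" "binary_on W y" "pattern W x = pattern W y" "i \<in> W"
  shows "x (Nd i) = y (Nd i)"
  using assms unfolding binary_on_def pattern_def by (metis (mono_tags, lifting) mem_Collect_eq)

lemma moment_eq_sum_pattern_weights:
  assumes "finite W" "finite A" "\<forall>x\<in>A. binary_on W x" "U \<subseteq> W"
  shows "(\<Sum>x\<in>A. u x * (\<Prod>i\<in>U. x (Nd i)))
    = (\<Sum>T\<in>{T\<in>Pow W. U \<subseteq> T}. sum u {x\<in>A. pattern W x = T})"
proof -
  have "(\<Sum>x\<in>A. u x * (\<Prod>i\<in>U. x (Nd i))) = (\<Sum>x\<in>A. if U \<subseteq> pattern W x then u x else 0)"
  proof (intro sum.cong refl)
    fix x assume "x \<in> A"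
    then show "u x * (\<Prod>i\<in>U. x (Nd i)) = (if U \<subseteq> pattern W x then u x else 0)"
      using assms prod_binary_eq_indicator[of W x U] by simp
  qed
  also have "\<dots> = sum u {x\<in>A. U \<subseteq> pattern W x}"
    using assms(2) by (simp add: sum.inter_filter)
  also have "\<dots> = (\<Sum>T\<in>{T\<in>Pow W. U \<subseteq> T}. sum u {x\<in>{x\<in>A. U \<subseteq> pattern W x}. pattern W x = T})"
    using assms(1,2) by (intro sum_over_classes) (auto simp: pattern_def)
  also have "\<dots> = (\<Sum>T\<in>{T\<in>Pow W. U \<subseteq> T}. sum u {x\<in>A. pattern W x = T})"
    by (intro sum.cong refl arg_cong[where f = "sum u"]) auto
  finally show ?thesis .
qed

lemma pattern_weights_eq_if_moments_eq:
  assumes W: "finite W" and A: "finite A" "\<forall>x\<in>A. binary_on W x"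
    and B: "finite B" "\<forall>y\<in>B. binary_on W y"
    and moments: "\<And>U. U \<subseteq> W \<Longrightarrow>
      (\<Sum>x\<in>A. u x * (\<Prod>i\<in>U. x (Nd i))) = (\<Sum>y\<in>B. v y * (\<Prod>i\<in>U. y (Nd i)))"
  shows "sum u {x\<in>A. pattern W x = T} = sum v {y\<in>B. pattern W y = T}"
proof (cases "T \<subseteq> W")
  case True
  let ?d = "\<lambda>T. sum u {x\<in>A. pattern W x = T} - sum v {y\<in>B. pattern W y = T}"
  have "(\<Sum>T'\<in>{T'\<in>Pow W. U \<subseteq> T'}. ?d T') = 0" if "U \<subseteq> W" for U
    using moments[OF that] moment_eq_sum_pattern_weights[OF W A that, of u]
      moment_eq_sum_pattern_weights[OF W B that, of v]
    by (simp add: sum_subtractf)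
  then show ?thesis using superset_sums_zero_imp_zero[OF W _ True, of ?d] by simp
next
  case False
  then have "{x\<in>A. pattern W x = T} = {}" "{y\<in>B. pattern W y = T} = {}"
    by (auto simp: pattern_def)
  then show ?thesis by (metis sum.empty)
qed

lemma finite_card_cases:
  assumes "finite U"
  obtains "U = {}" | i where "U = {i}" | "2 \<le> card U"
  using assms by (metis One_nat_def card_1_singletonE card_0_eq less_2_cases not_le)

definition monomial :: "('a coord \<Rightarrow> real) \<Rightarrow> 'a set \<Rightarrow> real" where
  "monomial z U = (if U = {} then 1 else if card U = 1 then z (Nd (the_elem U)) else z (Ed U))"

lemma monomial_PP_point:
  assumes x: "x \<in> PP_points H" and U: "finite U" "U \<subseteq> nodes H" "2 \<le> card U \<Longrightarrow> U \<in> edges H"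
  shows "monomial x U = (\<Prod>i\<in>U. x (Nd i))"
  using finite_card_cases[OF U(1)]
  by cases (use x U in \<open>auto simp: monomial_def PP_points_def\<close>)

lemma monomial_convex_combination:
  assumes "sum u A = 1"
  shows "monomial (\<Sum>x\<in>A. u x *\<^sub>R x) U = (\<Sum>x\<in>A. u x * monomial x U)"
  using assms by (simp add: monomial_def sum_fun_apply)

lemma monomial_restr:
  assumes "finite U" "U \<subseteq> nodes H" "2 \<le> card U \<Longrightarrow> U \<in> edges H"
  shows "monomial (restr H z) U = monomial z U"
  using finite_card_cases[OF assms(1)]
  by cases (use assms in \<open>auto simp: monomial_def restr_def coords_def\<close>)

lemma moment_eq_monomial:
  assumes "A \<subseteq> PP_points H" "sum u A = 1" "(\<Sum>x\<in>A. u x *\<^sub>R x) = restr H z"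
    and "finite U" "U \<subseteq> nodes H" "2 \<le> card U \<Longrightarrow> U \<in> edges H"
  shows "(\<Sum>x\<in>A. u x * (\<Prod>i\<in>U. x (Nd i))) = monomial z U"
proof -
  have "(\<Sum>x\<in>A. u x * (\<Prod>i\<in>U. x (Nd i))) = monomial (\<Sum>x\<in>A. u x *\<^sub>R x) U"
    using assms(1,2,4-6) monomial_PP_point[of _ H U]
    by (auto simp: monomial_convex_combination intro!: sum.cong)
  also have "\<dots> = monomial z U"
    using assms(3-6) by (simp add: monomial_restr)
  finally show ?thesis .
qed

subsection \<open>Section hypergraphs and gluing\<close>

lemma section_hg_simps [simp]:
  "nodes (section_hg G V) = V"
  "edges (section_hg G V) = {e\<in>edges G. e \<subseteq> V}"
  "lminus (section_hg G V) = lminus G \<inter> V"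
  "lplus (section_hg G V) = lplus G \<inter> V"
  by (simp_all add: section_hg_def)

lemma coords_section_hg [simp]:
  "Nd i \<in> coords (section_hg G V) \<longleftrightarrow> i \<in> V"
  "Ed e \<in> coords (section_hg G V) \<longleftrightarrow> e \<in> edges G \<and> e \<subseteq> V"
  "Lp i \<in> coords (section_hg G V) \<longleftrightarrow> i \<in> (lminus G \<union> lplus G) \<inter> V"
  by (auto simp: coords_def)

lemma hypergraph_with_loops_finite_edges:
  "hypergraph_with_loops G \<Longrightarrow> e \<in> edges G \<Longrightarrow> finite e"
  unfolding hypergraph_with_loops_def by (metis card.infinite not_numeral_le_zero)

lemma coords_eq_Un_sections:
  assumes "hypergraph_with_loops G" "nodes G = V1 \<union> V2" "\<forall>e\<in>edges G. e \<subseteq> V1 \<or> e \<subseteq> V2"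
  shows "coords G = coords (section_hg G V1) \<union> coords (section_hg G V2)"
  using assms by (auto simp: coords_def hypergraph_with_loops_def)

lemma PP_subset_space: "PP G \<subseteq> space G"
proof -
  have "convex (space G)" by (auto simp: convex_def space_def)
  moreover have "PP_points G \<subseteq> space G" by (auto simp: PP_points_def)
  ultimately show ?thesis unfolding PP_def conv_eq_convex_hull by (rule hull_minimal[rotated])
qed

lemma linear_restr: "linear (restr H)"
  by (rule linearI) (auto simp: restr_def fun_eq_iff)

lemma restr_section_in_PP_points:
  assumes "x \<in> PP_points G" "V \<subseteq> nodes G"
  shows "restr (section_hg G V) x \<in> PP_points (section_hg G V)"
proof -
  have "(\<Prod>i\<in>e. restr (section_hg G V) x (Nd i)) = (\<Prod>i\<in>e. x (Nd i))" if "e \<subseteq> V" for e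
    using that by (intro prod.cong) (auto simp: restr_def)
  then show ?thesis using assms by (auto simp: PP_points_def restr_def space_def)
qed

lemma restr_section_in_PP:
  assumes "z \<in> PP G" "V \<subseteq> nodes G"
  shows "restr (section_hg G V) z \<in> PP (section_hg G V)"
proof -
  have "restr (section_hg G V) z \<in> convex hull (restr (section_hg G V) ` PP_points G)"
    using assms(1) by (intro in_convex_hull_linear_image linear_restr) (simp add: PP_def conv_eq_convex_hull)
  also have "\<dots> \<subseteq> convex hull PP_points (section_hg G V)"
    using restr_section_in_PP_points assms(2) by (intro hull_mono) blast
  finally show ?thesis by (simp add: PP_def conv_eq_convex_hull)
qed

definition glue :: "'a hgraph \<Rightarrow> ('a coord \<Rightarrow> real) \<Rightarrow> ('a coord \<Rightarrow> real) \<Rightarrow> 'a coord \<Rightarrow> real" where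
  "glue H x y = (\<lambda>c. if c \<in> coords H then x c else y c)"

lemma linear_glue: "linear (\<lambda>p. glue H (fst p) (snd p))"
  by (rule linearI) (auto simp: glue_def fun_eq_iff)

lemma glue_restr:
  assumes "coords G = coords H1 \<union> coords H2" "z \<in> space G"
  shows "glue H1 (restr H1 z) (restr H2 z) = z"
  using assms by (auto simp: glue_def restr_def space_def fun_eq_iff)

lemma glue_in_PP_points:
  assumes hg: "hypergraph_with_loops G" and nV: "nodes G = V1 \<union> V2"
    and eV: "\<forall>e\<in>edges G. e \<subseteq> V1 \<or> e \<subseteq> V2"
    and x: "x \<in> PP_points (section_hg G V1)" and y: "y \<in> PP_points (section_hg G V2)"
    and agree: "\<And>i. i \<in> V1 \<inter> V2 \<Longrightarrow> x (Nd i) = y (Nd i)"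
  shows "glue (section_hg G V1) x y \<in> PP_points G"
proof -
  let ?g = "glue (section_hg G V1) x y"
  have loops: "lminus G \<union> lplus G \<subseteq> V1 \<union> V2"
    using hg nV by (auto simp: hypergraph_with_loops_def)
  have node1: "?g (Nd i) = x (Nd i)" if "i \<in> V1" for i
    using that by (simp add: glue_def)
  have node2: "?g (Nd i) = y (Nd i)" if "i \<in> V2" for i
    using that agree by (auto simp: glue_def)
  have "?g \<in> space G"
    using y coords_eq_Un_sections[OF hg nV eV] by (auto simp: space_def PP_points_def glue_def)
  moreover have "\<forall>i\<in>lplus G. ?g (Lp i) \<ge> (?g (Nd i))\<^sup>2"
    and "\<forall>i\<in>lminus G. ?g (Lp i) \<le> (?g (Nd i))\<^sup>2"
    and "\<forall>i\<in>nodes G. 0 \<le> ?g (Nd i) \<and> ?g (Nd i) \<le> 1"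
    using x y loops nV node2 by (auto simp: PP_points_def glue_def)
  moreover have "?g (Ed e) = (\<Prod>i\<in>e. ?g (Nd i))" if e: "e \<in> edges G" for e
  proof (cases "e \<subseteq> V1")
    case True
    then have "(\<Prod>i\<in>e. ?g (Nd i)) = (\<Prod>i\<in>e. x (Nd i))"
      using node1 by (intro prod.cong) auto
    then show ?thesis using True e x by (auto simp: PP_points_def glue_def)
  next
    case False
    then have "e \<subseteq> V2" using eV e by auto
    then have "(\<Prod>i\<in>e. ?g (Nd i)) = (\<Prod>i\<in>e. y (Nd i))"
      using node2 by (intro prod.cong) auto
    then show ?thesis using False \<open>e \<subseteq> V2\<close> e y by (auto simp: PP_points_def glue_def)
  qed
  ultimately show ?thesis unfolding PP_points_def by blast
qed

lemma in_PP_if_sections_in_PP: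
  assumes hg: "hypergraph_with_loops G" and nV: "nodes G = V1 \<union> V2"
    and eV: "\<forall>e\<in>edges G. e \<subseteq> V1 \<or> e \<subseteq> V2"
    and no_plus: "lplus G \<inter> (V1 \<inter> V2) = {}"
    and complete: "\<And>U. U \<subseteq> V1 \<inter> V2 \<Longrightarrow> 2 \<le> card U \<Longrightarrow> U \<in> edges G"
    and z: "z \<in> space G"
    and z1: "restr (section_hg G V1) z \<in> PP (section_hg G V1)"
    and z2: "restr (section_hg G V2) z \<in> PP (section_hg G V2)"
  shows "z \<in> PP G"
proof -
  define W where "W = V1 \<inter> V2"
  let ?G1 = "section_hg G V1" and ?G2 = "section_hg G V2"
  have finW: "finite W"
    using hg nV by (auto simp: W_def hypergraph_with_loops_def intro: finite_subset)
  note fin = hypergraph_with_loops_finite_edges[OF hg]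
  obtain A u where A: "finite A" "A \<subseteq> binary_points ?G1 W" "\<forall>x\<in>A. 0 \<le> u x" "sum u A = 1"
    and zA: "(\<Sum>x\<in>A. u x *\<^sub>R x) = restr ?G1 z"
    using convex_hull_PP_points_binary_combination[of W ?G1 "restr ?G1 z"] finW no_plus fin z1
    by (auto simp: W_def PP_def conv_eq_convex_hull)
  obtain B v where B: "finite B" "B \<subseteq> binary_points ?G2 W" "\<forall>y\<in>B. 0 \<le> v y" "sum v B = 1"
    and zB: "(\<Sum>y\<in>B. v y *\<^sub>R y) = restr ?G2 z"
    using convex_hull_PP_points_binary_combination[of W ?G2 "restr ?G2 z"] finW no_plus fin z2
    by (auto simp: W_def PP_def conv_eq_convex_hull)
  have points: "A \<subseteq> PP_points ?G1" "B \<subseteq> PP_points ?G2"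
    and binary: "\<forall>x\<in>A. binary_on W x" "\<forall>y\<in>B. binary_on W y"
    using A(2) B(2) by (auto simp: binary_points_def)
  have moments: "(\<Sum>x\<in>A. u x * (\<Prod>i\<in>U. x (Nd i))) = (\<Sum>y\<in>B. v y * (\<Prod>i\<in>U. y (Nd i)))"
    if U: "U \<subseteq> W" for U
  proof -
    have "finite U" using U finW by (rule finite_subset)
    moreover have "2 \<le> card U \<Longrightarrow> U \<in> edges G" using U complete by (simp add: W_def)
    ultimately show ?thesis
      using U moment_eq_monomial[OF points(1) A(4) zA] moment_eq_monomial[OF points(2) B(4) zB]
      by (simp add: W_def)
  qed
  have "(\<lambda>p. glue ?G1 (fst p) (snd p)) (\<Sum>x\<in>A. u x *\<^sub>R x, \<Sum>y\<in>B. v y *\<^sub>R y)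
      \<in> convex hull PP_points G"
  proof (rule coupled_convex_combination_in_convex_hull[OF linear_glue A(1) B(1) A(3,4) B(3)])
    show "sum u {x\<in>A. pattern W x = T} = sum v {y\<in>B. pattern W y = T}" for T
      using pattern_weights_eq_if_moments_eq[OF finW A(1) binary(1) B(1) binary(2) moments] .
    show "glue ?G1 (fst (x, y)) (snd (x, y)) \<in> PP_points G"
      if "x \<in> A" "y \<in> B" "pattern W x = pattern W y" for x y
      using that A(2) B(2) binary eq_on_nodes_if_pattern_eq[of W x y]
      by (auto simp: W_def binary_points_def intro!: glue_in_PP_points[OF hg nV eV])
  qed
  then show ?thesis
    using glue_restr[OF coords_eq_Un_sections[OF hg nV eV] z]
    by (simp add: zA zB PP_def conv_eq_convex_hull)
qed

theorem corollary1:
  fixes G G1 G2 :: "'a hgraph"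
  assumes "hypergraph_with_loops G"
    and "is_section_hg G1 G" and "is_section_hg G2 G"
    and "hg_union G1 G2 = G"
    and "complete_hg (hg_inter G1 G2)"
    and "lplus (hg_inter G1 G2) = {}"
  shows "PP G = {z \<in> space G. restr G1 z \<in> PP G1 \<and> restr G2 z \<in> PP G2}"
proof -
  obtain V1 V2 where V: "V1 \<subseteq> nodes G" "V2 \<subseteq> nodes G"
    and G1: "G1 = section_hg G V1" and G2: "G2 = section_hg G V2"
    using assms(2,3) unfolding is_section_hg_def by blast
  have union: "nodes G = V1 \<union> V2" "\<forall>e\<in>edges G. e \<subseteq> V1 \<or> e \<subseteq> V2"
    using arg_cong[OF assms(4), of nodes] arg_cong[OF assms(4), of edges]
    by (auto simp: hg_union_def G1 G2)
  have no_plus: "lplus G \<inter> (V1 \<inter> V2) = {}"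
    using assms(6) by (auto simp: hg_inter_def G1 G2)
  have complete: "U \<in> edges G" if "U \<subseteq> V1 \<inter> V2" "2 \<le> card U" for U
    using assms(5) that by (auto simp: complete_hg_def hg_inter_def G1 G2)
  show ?thesis
  proof (intro set_eqI iffI)
    fix z assume "z \<in> PP G"
    then show "z \<in> {z \<in> space G. restr G1 z \<in> PP G1 \<and> restr G2 z \<in> PP G2}"
      using PP_subset_space restr_section_in_PP V unfolding G1 G2 by blast
  next
    fix z assume "z \<in> {z \<in> space G. restr G1 z \<in> PP G1 \<and> restr G2 z \<in> PP G2}"
    then show "z \<in> PP G"
      using in_PP_if_sections_in_PP[OF assms(1) union no_plus complete] unfolding G1 G2 by blast
  qed
qed

end
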